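(* Let $\Gamma=((V,E),m)$ be an EAFC system with $V$ finite, $G=G_\Gamma$ and $S\subseteq V$. Then $QZ_G(G_S)=\bigcap_{s\in S}QZ_G(G_{\{s\}})$; that is, if $g\in G$ satisfies $gSg^{-1}=S$ then $gsg^{-1}=s$ for every $s\in S$. Moreover, for every $g\in N_G(G_S)\setminus G_S$ there exists $g'\in N_G(G_S)$ with $g'G_S=gG_S$ such that $g'$ commutes with every element of $G_S$.
   Context: An Artin–Tits system $\Gamma=((V,E),m)$ consists of a simplicial graph $(V,E)$ and a labelling $m\colon E\to\{2,3,\dots\}$; $G_\Gamma=\langle V \mid \mathrm{prod}(u,v,m(\{u,v\}))=\mathrm{prod}(v,u,m(\{u,v\}))\ \forall \{u,v\}\in E\rangle$, where $\mathrm{prod}(u,v,n)$ is the prefix of length $n$ of $uvuv\cdots$. An EAFC system has all labels even and among any three pairwise adjacent vertices at least two of the three edges have label $2$. For $S\subseteq V$, $G_S=\langle S\rangle$. The normalizer is $N_G(G_S)=\{g\in G\mid gG_Sg^{-1}=G_S\}$ and the quasi-centralizer is $QZ_G(G_S)=\{g\in G\mid gS=Sg\}$ (equality of subsets of $G$). *)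

theory Defs
  imports "HOL-Algebra.Algebra"
begin

definition artin_system :: "'v set \<Rightarrow> 'v set set \<Rightarrow> ('v set \<Rightarrow> nat) \<Rightarrow> bool" where
  "artin_system V E m \<longleftrightarrow>
     (\<forall>e\<in>E. \<exists>u v. e = {u, v} \<and> u \<noteq> v \<and> u \<in> V \<and> v \<in> V) \<and>
     (\<forall>e\<in>E. m e \<ge> 2)"

definition EAFC :: "'v set \<Rightarrow> 'v set set \<Rightarrow> ('v set \<Rightarrow> nat) \<Rightarrow> bool" where
  "EAFC V E m \<longleftrightarrow> artin_system V E m \<and>
     (\<forall>e\<in>E. even (m e)) \<and>
     (\<forall>a\<in>V. \<forall>b\<in>V. \<forall>c\<in>V. a \<noteq> b \<and> b \<noteq> c \<and> a \<noteq> c \<and>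
        {a,b} \<in> E \<and> {b,c} \<in> E \<and> {a,c} \<in> E \<longrightarrow>
        card {e \<in> {{a,b},{b,c},{a,c}}. m e = 2} \<ge> 2)"

text \<open>A letter (v, True) is the generator v, (v, False) is its inverse.\<close>
type_synonym 'v word = "('v \<times> bool) list"

definition alt_prod :: "'v \<Rightarrow> 'v \<Rightarrow> nat \<Rightarrow> 'v word" where
  "alt_prod u v n = map (\<lambda>i. if even i then (u, True) else (v, True)) [0..<n]"

definition word_inv :: "'v word \<Rightarrow> 'v word" where
  "word_inv w = rev (map (\<lambda>(a, b). (a, \<not> b)) w)"

inductive artin_eq :: "'v set \<Rightarrow> 'v set set \<Rightarrow> ('v set \<Rightarrow> nat) \<Rightarrow> 'v word \<Rightarrow> 'v word \<Rightarrow> bool"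
  for V E m where
  refl: "w \<in> lists (V \<times> UNIV) \<Longrightarrow> artin_eq V E m w w"
| cancel: "x \<in> lists (V \<times> UNIV) \<Longrightarrow> y \<in> lists (V \<times> UNIV) \<Longrightarrow> a \<in> V \<Longrightarrow>
     artin_eq V E m (x @ [(a, b), (a, \<not> b)] @ y) (x @ y)"
| braid: "x \<in> lists (V \<times> UNIV) \<Longrightarrow> y \<in> lists (V \<times> UNIV) \<Longrightarrow> {u, v} \<in> E \<Longrightarrow>
     artin_eq V E m (x @ alt_prod u v (m {u, v}) @ y) (x @ alt_prod v u (m {u, v}) @ y)"
| sym: "artin_eq V E m w w' \<Longrightarrow> artin_eq V E m w' w"
| trans: "artin_eq V E m w w' \<Longrightarrow> artin_eq V E m w' w'' \<Longrightarrow> artin_eq V E m w w''"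

definition artin_class :: "'v set \<Rightarrow> 'v set set \<Rightarrow> ('v set \<Rightarrow> nat) \<Rightarrow> 'v word \<Rightarrow> 'v word set" where
  "artin_class V E m w = {w'. artin_eq V E m w w'}"

definition artin_group :: "'v set \<Rightarrow> 'v set set \<Rightarrow> ('v set \<Rightarrow> nat) \<Rightarrow> 'v word set monoid" where
  "artin_group V E m =
     \<lparr> carrier = artin_class V E m ` lists (V \<times> UNIV),
       monoid.mult = (\<lambda>A B. \<Union>{artin_class V E m (x @ y) | x y. x \<in> A \<and> y \<in> B}),
       one = artin_class V E m [] \<rparr>"

definition artin_gen :: "'v set \<Rightarrow> 'v set set \<Rightarrow> ('v set \<Rightarrow> nat) \<Rightarrow> 'v \<Rightarrow> 'v word set" where
  "artin_gen V E m s = artin_class V E m [(s, True)]"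

definition parabolic :: "'v set \<Rightarrow> 'v set set \<Rightarrow> ('v set \<Rightarrow> nat) \<Rightarrow> 'v set \<Rightarrow> 'v word set set" where
  "parabolic V E m S = generate (artin_group V E m) (artin_gen V E m ` S)"

definition quasi_centralizer :: "'v set \<Rightarrow> 'v set set \<Rightarrow> ('v set \<Rightarrow> nat) \<Rightarrow> 'v set \<Rightarrow> 'v word set set" where
  "quasi_centralizer V E m S =
     {g \<in> carrier (artin_group V E m).
        g <#\<^bsub>artin_group V E m\<^esub> (artin_gen V E m ` S)
        = (artin_gen V E m ` S) #>\<^bsub>artin_group V E m\<^esub> g}"

end

theory Submission
  imports Defs
begin

text \<open>When all labels are even, deleting from a word every letter outside a set T of vertices
  respects the defining relations: a braid relation between two letters of which at most one
  survives becomes an identity between two equal powers of that letter. This gives a retraction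
  rho_T of G onto G_T. If g normalizes G_S, then g' = rho_S(g)^-1 g lies in the same coset and has
  rho_S(g') = 1, so for h in G_S the element g' h g'^-1 of G_S equals its own image h. For the
  quasi-centralizer, g s = t g with s, t in S forces s = t: apply rho_{s} and compare total exponent sums.\<close>

lemma (in group) normalizer_conj_closed:
  assumes "subgroup H G" "g \<in> normalizer G H" "h \<in> H"
  shows "g \<otimes> h \<otimes> inv g \<in> H"
proof -
  have "H \<subseteq> carrier G" using assms(1) by (rule subgroup.subset)
  then have "g <# H #> inv g = H"
    using assms(2) unfolding normalizer_def stabilizer_def by simp
  then show ?thesis
    using assms(3) unfolding l_coset_def r_coset_def by blast
qed

lemma (in group) subgroup_subset_normalizer:
  assumes "subgroup H G"
  shows "H \<subseteq> normalizer G H"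
  using subgroup.subset[OF normal_imp_subgroup[OF subgroup_in_normalizer[OF assms]]]
  by simp

lemma (in group) retraction_normalizer_centralizing_representative:
  assumes H: "subgroup H G" and hom: "\<rho> \<in> hom G G"
    and into: "\<rho> ` carrier G \<subseteq> H" and fix_H: "\<And>h. h \<in> H \<Longrightarrow> \<rho> h = h"
    and g: "g \<in> normalizer G H"
  defines "g' \<equiv> inv (\<rho> g) \<otimes> g"
  shows "g' \<in> normalizer G H" "g' <# H = g <# H" "\<And>h. h \<in> H \<Longrightarrow> g' \<otimes> h = h \<otimes> g'"
proof -
  interpret \<rho>: group_hom G G \<rho> using hom by unfold_locales
  have HG: "H \<subseteq> carrier G" using H by (rule subgroup.subset)
  have N: "subgroup (normalizer G H) G" using HG by (rule normalizer_imp_subgroup)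
  have gG: "g \<in> carrier G" using g N by (rule subgroup.mem_carrier[rotated])
  define r where "r = \<rho> g"
  have rH: "r \<in> H" using into gG unfolding r_def by blast
  then have rG: "r \<in> carrier G" using HG by blast
  have g'G: "g' \<in> carrier G" unfolding g'_def r_def[symmetric] using rG gG by simp
  have "inv r \<in> normalizer G H"
    using subgroup_subset_normalizer[OF H] subgroup.m_inv_closed[OF H rH] by blast
  then show g'N: "g' \<in> normalizer G H"
    unfolding g'_def r_def[symmetric] using subgroup.m_closed[OF N _ g] by blast
  have "inv g \<in> normalizer G H" using subgroup.m_inv_closed[OF N g] .
  then have "inv g \<otimes> inv r \<otimes> inv (inv g) \<in> H"
    using normalizer_conj_closed[OF H] subgroup.m_inv_closed[OF H rH] by blast
  moreover have "g' = g \<otimes> (inv g \<otimes> inv r \<otimes> g)"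
    unfolding g'_def r_def[symmetric] using gG rG by (simp flip: m_assoc)
  ultimately have "g' \<in> g <# H"
    using gG unfolding l_coset_def by auto
  then show "g' <# H = g <# H" using l_repr_independence[OF _ gG H] by simp
  have \<rho>g': "\<rho> g' = \<one>"
    unfolding g'_def using gG fix_H[OF rH] by (simp add: r_def)
  fix h assume h: "h \<in> H"
  then have hG: "h \<in> carrier G" using HG by blast
  have "g' \<otimes> h \<otimes> inv g' = \<rho> (g' \<otimes> h \<otimes> inv g')"
    using fix_H normalizer_conj_closed[OF H g'N h] by simp
  also have "\<dots> = h"
    using g'G hG \<rho>g' fix_H[OF h] by simp
  finally show "g' \<otimes> h = h \<otimes> g'"
    using g'G hG by (metis inv_solve_right m_closed inv_closed)
qed

definition word_degree :: "'v word \<Rightarrow> int" where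
  "word_degree w = (\<Sum>(_, b)\<leftarrow>w. if b then 1 else -1)"

lemma word_degree_simps [simp]:
  "word_degree [] = 0"
  "word_degree ((a, b) # w) = (if b then 1 else -1) + word_degree w"
  "word_degree (w @ w') = word_degree w + word_degree w'"
  by (simp_all add: word_degree_def)

lemma alt_prod_Suc:
  "alt_prod u v (Suc n) = alt_prod u v n @ [if even n then (u, True) else (v, True)]"
  unfolding alt_prod_def by simp

lemma word_degree_alt_prod: "word_degree (alt_prod u v n) = int n"
  by (induction n) (simp_all add: alt_prod_Suc alt_prod_def[where n = 0])

lemma artin_eq_word_degree: "artin_eq V E m w w' \<Longrightarrow> word_degree w = word_degree w'"
  by (induction rule: artin_eq.induct) (simp_all add: word_degree_alt_prod)

lemma filter_alt_prod:
  "filter P (alt_prod u v n) =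
    (if P (u, True) \<and> P (v, True) then alt_prod u v n
     else if P (u, True) then replicate ((n + 1) div 2) (u, True)
     else if P (v, True) then replicate (n div 2) (v, True) else [])"
proof (induction n)
  case 0
  then show ?case by (simp add: alt_prod_def)
next
  case (Suc n)
  show ?case
  proof (cases "even n")
    case True
    then have "(Suc n + 1) div 2 = Suc ((n + 1) div 2)" "Suc n div 2 = n div 2" by presburger+
    then show ?thesis using Suc True by (simp add: alt_prod_Suc replicate_append_same)
  next
    case False
    then have "(Suc n + 1) div 2 = (n + 1) div 2" "Suc n div 2 = Suc (n div 2)" by presburger+
    then show ?thesis using Suc False by (simp add: alt_prod_Suc replicate_append_same)
  qed
qed

definition word_restrict :: "'v set \<Rightarrow> 'v word \<Rightarrow> 'v word" where
  "word_restrict T = filter (\<lambda>(a, _). a \<in> T)"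

lemma word_restrict_alt_prod_swap:
  assumes "even n" "u \<noteq> v" "\<not> (u \<in> T \<and> v \<in> T)"
  shows "word_restrict T (alt_prod u v n) = word_restrict T (alt_prod v u n)"
proof -
  have "(n + 1) div 2 = n div 2" using assms(1) by presburger
  then show ?thesis using assms(2,3) by (auto simp: word_restrict_def filter_alt_prod)
qed

locale artin_presentation =
  fixes V :: "'v set" and E :: "'v set set" and m :: "'v set \<Rightarrow> nat"
  assumes artin_system: "artin_system V E m"
begin

abbreviation words where "words \<equiv> lists (V \<times> (UNIV :: bool set))"
abbreviation eq where "eq \<equiv> artin_eq V E m"
abbreviation cls where "cls \<equiv> artin_class V E m"
abbreviation G where "G \<equiv> artin_group V E m"
abbreviation gen where "gen \<equiv> artin_gen V E m"

lemma edge_vertices: "{u, v} \<in> E \<Longrightarrow> u \<in> V \<and> v \<in> V \<and> u \<noteq> v"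
  using artin_system unfolding artin_system_def by (auto simp: doubleton_eq_iff)

lemma alt_prod_in_words: "u \<in> V \<Longrightarrow> v \<in> V \<Longrightarrow> alt_prod u v n \<in> words"
  unfolding alt_prod_def by auto

lemma artin_eq_in_words: "eq w w' \<Longrightarrow> w \<in> words \<and> w' \<in> words"
  by (induction rule: artin_eq.induct)
    (auto dest!: edge_vertices simp: alt_prod_def split: if_splits)

lemma artin_eq_append_left: "eq w w' \<Longrightarrow> x \<in> words \<Longrightarrow> eq (x @ w) (x @ w')"
proof (induction rule: artin_eq.induct)
  case (refl w)
  then show ?case by (intro artin_eq.refl) auto
next
  case (cancel y z a b)
  then show ?case using artin_eq.cancel[of "x @ y" V z a E m b] by auto
next
  case (braid y z u v)
  then show ?case using artin_eq.braid[of "x @ y" V z u v E m] by auto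
next
  case (sym w w')
  then show ?case by (blast intro: artin_eq.sym)
next
  case (trans w w' w'')
  then show ?case by (blast intro: artin_eq.trans)
qed

lemma artin_eq_append_right: "eq w w' \<Longrightarrow> x \<in> words \<Longrightarrow> eq (w @ x) (w' @ x)"
proof (induction rule: artin_eq.induct)
  case (refl w)
  then show ?case by (intro artin_eq.refl) auto
next
  case (cancel y z a b)
  then show ?case using artin_eq.cancel[of y V "z @ x" a E m b] by auto
next
  case (braid y z u v)
  then show ?case using artin_eq.braid[of y V "z @ x" u v E m] by auto
next
  case (sym w w')
  then show ?case by (blast intro: artin_eq.sym)
next
  case (trans w w' w'')
  then show ?case by (blast intro: artin_eq.trans)
qed

lemma artin_eq_append: "eq w w' \<Longrightarrow> eq x x' \<Longrightarrow> eq (w @ x) (w' @ x')"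
  by (meson artin_eq.trans artin_eq_in_words artin_eq_append_left artin_eq_append_right)

lemma artin_class_eqI: "eq w w' \<Longrightarrow> cls w = cls w'"
  unfolding artin_class_def by (auto intro: artin_eq.sym artin_eq.trans)

lemma artin_class_eq_iff: "w \<in> words \<Longrightarrow> cls w = cls w' \<longleftrightarrow> eq w w'"
proof
  assume "w \<in> words" "cls w = cls w'"
  then have "w \<in> cls w'" unfolding artin_class_def by (auto intro: artin_eq.refl)
  then show "eq w w'" unfolding artin_class_def by (auto intro: artin_eq.sym)
qed (rule artin_class_eqI)

lemma carrier_artin_group: "carrier G = cls ` words"
  unfolding artin_group_def by simp

lemma one_artin_group: "\<one>\<^bsub>G\<^esub> = cls []"
  unfolding artin_group_def by simp

lemma mult_artin_class: "w \<in> words \<Longrightarrow> x \<in> words \<Longrightarrow> cls w \<otimes>\<^bsub>G\<^esub> cls x = cls (w @ x)"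
proof -
  assume "w \<in> words" "x \<in> words"
  then have "w \<in> cls w" "x \<in> cls x"
    unfolding artin_class_def by (auto intro: artin_eq.refl)
  moreover have "cls (a @ b) = cls (w @ x)" if "a \<in> cls w" "b \<in> cls x" for a b
  proof -
    have "eq (w @ x) (a @ b)" using that artin_eq_append unfolding artin_class_def by blast
    then show ?thesis by (rule artin_class_eqI[symmetric])
  qed
  ultimately have "{cls (a @ b) | a b. a \<in> cls w \<and> b \<in> cls x} = {cls (w @ x)}"
    by blast
  then show ?thesis unfolding artin_group_def by simp
qed

lemma word_inv_in_words: "w \<in> words \<Longrightarrow> word_inv w \<in> words"
  unfolding word_inv_def by auto

lemma artin_eq_word_inv_append: "w \<in> words \<Longrightarrow> eq (word_inv w @ w) []"
proof (induction w)
  case Nil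
  then show ?case by (simp add: word_inv_def artin_eq.refl)
next
  case (Cons a w)
  obtain v b where a: "a = (v, b)" by (cases a)
  have w: "w \<in> words" "v \<in> V" using Cons a by auto
  have "eq (word_inv w @ [(v, \<not> b), (v, \<not> \<not> b)] @ w) (word_inv w @ w)"
    by (rule artin_eq.cancel) (use w word_inv_in_words in auto)
  then have "eq (word_inv (a # w) @ a # w) (word_inv w @ w)"
    using a by (simp add: word_inv_def)
  then show ?case using Cons w by (blast intro: artin_eq.trans)
qed

lemma group_artin_group: "group G"
proof (rule groupI)
  fix x y assume "x \<in> carrier G" "y \<in> carrier G"
  then obtain w w' where "w \<in> words" "w' \<in> words" "x = cls w" "y = cls w'"
    by (auto simp: carrier_artin_group)
  then show "x \<otimes>\<^bsub>G\<^esub> y \<in> carrier G"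
    by (simp add: carrier_artin_group mult_artin_class del: in_lists_conv_set)
next
  fix x y z assume "x \<in> carrier G" "y \<in> carrier G" "z \<in> carrier G"
  then obtain u w w' where "u \<in> words" "w \<in> words" "w' \<in> words" "x = cls u" "y = cls w" "z = cls w'"
    by (auto simp: carrier_artin_group)
  then show "x \<otimes>\<^bsub>G\<^esub> y \<otimes>\<^bsub>G\<^esub> z = x \<otimes>\<^bsub>G\<^esub> (y \<otimes>\<^bsub>G\<^esub> z)"
    by (simp add: mult_artin_class del: in_lists_conv_set)
next
  fix x assume "x \<in> carrier G"
  then obtain w where "w \<in> words" "x = cls w" by (auto simp: carrier_artin_group)
  then show "\<one>\<^bsub>G\<^esub> \<otimes>\<^bsub>G\<^esub> x = x"
    using mult_artin_class[of "[]" w] by (simp add: one_artin_group)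
next
  fix x assume "x \<in> carrier G"
  then obtain w where w: "w \<in> words" "x = cls w" by (auto simp: carrier_artin_group)
  then have "cls (word_inv w) \<otimes>\<^bsub>G\<^esub> x = \<one>\<^bsub>G\<^esub>"
    using word_inv_in_words artin_eq_word_inv_append artin_class_eqI
    by (simp add: mult_artin_class one_artin_group)
  moreover have "cls (word_inv w) \<in> carrier G"
    using w word_inv_in_words by (simp add: carrier_artin_group)
  ultimately show "\<exists>y\<in>carrier G. y \<otimes>\<^bsub>G\<^esub> x = \<one>\<^bsub>G\<^esub>" by blast
qed (simp add: carrier_artin_group one_artin_group)

sublocale group G by (rule group_artin_group)

lemma inv_artin_class: "w \<in> words \<Longrightarrow> inv\<^bsub>G\<^esub> (cls w) = cls (word_inv w)"
  using word_inv_in_words artin_eq_word_inv_append artin_class_eqI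
  by (intro inv_equality) (simp_all add: mult_artin_class one_artin_group carrier_artin_group)

lemma artin_gen_in_carrier: "s \<in> V \<Longrightarrow> gen s \<in> carrier G"
  unfolding artin_gen_def carrier_artin_group by auto

lemma word_restrict_in_words: "w \<in> words \<Longrightarrow> word_restrict T w \<in> lists (T \<times> UNIV) \<inter> words"
  by (auto simp: word_restrict_def)

lemma lists_subset_words: "T \<subseteq> V \<Longrightarrow> lists (T \<times> UNIV) \<subseteq> words"
  by (rule lists_mono) blast

lemma parabolic_subset_classes:
  assumes "T \<subseteq> V"
  shows "parabolic V E m T \<subseteq> cls ` lists (T \<times> UNIV)"
  unfolding parabolic_def
proof
  fix x assume "x \<in> generate G (gen ` T)"
  then show "x \<in> cls ` lists (T \<times> UNIV)"
  proof (induction rule: generate.induct)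
    case one
    then show ?case by (auto simp: one_artin_group)
  next
    case (incl h)
    then show ?case by (auto simp: artin_gen_def)
  next
    case (inv h)
    then obtain s where "s \<in> T" "h = cls [(s, True)]" by (auto simp: artin_gen_def)
    then show ?case using assms by (auto simp: inv_artin_class word_inv_def)
  next
    case (eng h h')
    then obtain w w' where ww': "w \<in> lists (T \<times> UNIV)" "w' \<in> lists (T \<times> UNIV)"
      and "h = cls w" "h' = cls w'"
      by auto
    moreover have "w \<in> words" "w' \<in> words" using ww' lists_subset_words[OF assms] by auto
    ultimately have "h \<otimes>\<^bsub>G\<^esub> h' = cls (w @ w')"
      by (simp add: mult_artin_class del: in_lists_conv_set)
    then show ?case using ww' by auto
  qed
qed

lemma artin_class_in_parabolic:
  assumes "T \<subseteq> V" "w \<in> lists (T \<times> UNIV)"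
  shows "cls w \<in> parabolic V E m T"
  using assms(2)
proof (induction w)
  case Nil
  then show ?case unfolding parabolic_def using generate.one[of G] by (simp add: one_artin_group)
next
  case (Cons a w)
  obtain s b where a: "a = (s, b)" by (cases a)
  have s: "s \<in> T" "s \<in> V" using Cons a assms(1) by auto
  have w: "w \<in> words" using Cons lists_subset_words[OF assms(1)] by auto
  have "cls [a] \<in> parabolic V E m T"
  proof (cases b)
    case True
    then show ?thesis
      using s a unfolding parabolic_def artin_gen_def by (auto intro: generate.incl)
  next
    case False
    have "inv\<^bsub>G\<^esub> (gen s) = cls [(s, False)]"
      using s by (simp add: artin_gen_def inv_artin_class word_inv_def)
    then show ?thesis
      using s a False generate.inv[of "gen s" "gen ` T" G] unfolding parabolic_def by auto
  qed
  then have "cls [a] \<otimes>\<^bsub>G\<^esub> cls w \<in> parabolic V E m T"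
    using Cons unfolding parabolic_def by (auto intro: generate.eng)
  then show ?case using s a w by (simp add: mult_artin_class)
qed

lemma parabolic_eq_classes: "T \<subseteq> V \<Longrightarrow> parabolic V E m T = cls ` lists (T \<times> UNIV)"
  using parabolic_subset_classes artin_class_in_parabolic by blast

lemma subgroup_parabolic: "T \<subseteq> V \<Longrightarrow> subgroup (parabolic V E m T) G"
  unfolding parabolic_def by (rule generate_is_subgroup) (auto intro: artin_gen_in_carrier)

end

locale even_artin_presentation = artin_presentation V E m
  for V :: "'v set" and E :: "'v set set" and m :: "'v set \<Rightarrow> nat" +
  assumes even_labels: "\<And>e. e \<in> E \<Longrightarrow> even (m e)"
begin

lemma artin_eq_word_restrict_braid:
  assumes "{u, v} \<in> E"
  shows "eq (word_restrict T (alt_prod u v (m {u, v}))) (word_restrict T (alt_prod v u (m {u, v})))"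
proof (cases "u \<in> T \<and> v \<in> T")
  case True
  then show ?thesis
    using artin_eq.braid[of "[]" V "[]" u v E m] assms
    by (simp add: word_restrict_def filter_alt_prod)
next
  case False
  have uv: "u \<in> V" "v \<in> V" "u \<noteq> v" using edge_vertices assms by auto
  then have "word_restrict T (alt_prod v u (m {u, v})) \<in> words"
    using word_restrict_in_words alt_prod_in_words by blast
  then show ?thesis
    using word_restrict_alt_prod_swap[OF even_labels[OF assms] uv(3) False] by (simp add: artin_eq.refl)
qed

lemma artin_eq_word_restrict: "eq w w' \<Longrightarrow> eq (word_restrict T w) (word_restrict T w')"
proof (induction rule: artin_eq.induct)
  case (refl w)
  then show ?case by (intro artin_eq.refl) (auto simp: word_restrict_def)
next
  case (cancel x y a b)
  have restricted: "word_restrict T x \<in> words" "word_restrict T y \<in> words"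
    using cancel word_restrict_in_words by auto
  show ?case
  proof (cases "a \<in> T")
    case True
    then show ?thesis
      using artin_eq.cancel[OF restricted cancel(3), where b = b] by (simp add: word_restrict_def)
  next
    case False
    then show ?thesis
      using artin_eq.refl[OF append_in_lists_conv[THEN iffD2, OF conjI, OF restricted]]
      by (simp add: word_restrict_def)
  qed
next
  case (braid x y u v)
  have "word_restrict T x \<in> words" "word_restrict T y \<in> words"
    using braid word_restrict_in_words by auto
  then show ?case
    using artin_eq_word_restrict_braid[OF braid(3)]
    by (simp add: word_restrict_def artin_eq_append artin_eq.refl)
next
  case (sym w w')
  then show ?case by (blast intro: artin_eq.sym)
next
  case (trans w w' w'')
  then show ?case by (blast intro: artin_eq.trans)
qed

definition retraction :: "'v set \<Rightarrow> 'v word set \<Rightarrow> 'v word set" where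
  "retraction T x = \<Union>{cls (word_restrict T w) | w. w \<in> x}"

lemma retraction_artin_class: "w \<in> words \<Longrightarrow> retraction T (cls w) = cls (word_restrict T w)"
proof -
  assume "w \<in> words"
  then have "w \<in> cls w" unfolding artin_class_def by (auto intro: artin_eq.refl)
  moreover have "cls (word_restrict T w') = cls (word_restrict T w)" if "w' \<in> cls w" for w'
    using that artin_eq_word_restrict artin_class_eqI artin_eq.sym
    unfolding artin_class_def by blast
  ultimately have "{cls (word_restrict T w') | w'. w' \<in> cls w} = {cls (word_restrict T w)}"
    by blast
  then show ?thesis unfolding retraction_def by simp
qed

lemma retraction_hom: "retraction T \<in> hom G G"
proof (rule homI)
  fix x assume "x \<in> carrier G"
  then obtain w where "w \<in> words" "x = cls w" by (auto simp: carrier_artin_group)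
  then show "retraction T x \<in> carrier G"
    using word_restrict_in_words[of w T]
    by (simp add: carrier_artin_group retraction_artin_class del: in_lists_conv_set)
next
  fix x y assume "x \<in> carrier G" "y \<in> carrier G"
  then obtain w w' where "w \<in> words" "w' \<in> words" "x = cls w" "y = cls w'"
    by (auto simp: carrier_artin_group)
  then show "retraction T (x \<otimes>\<^bsub>G\<^esub> y) = retraction T x \<otimes>\<^bsub>G\<^esub> retraction T y"
    using word_restrict_in_words[of w T] word_restrict_in_words[of w' T]
    by (simp add: mult_artin_class retraction_artin_class word_restrict_def del: in_lists_conv_set)
qed

lemma retraction_into_parabolic:
  assumes "T \<subseteq> V"
  shows "retraction T ` carrier G \<subseteq> parabolic V E m T"
proof (rule image_subsetI)
  fix x assume "x \<in> carrier G"
  then obtain w where "w \<in> words" "x = cls w" by (auto simp: carrier_artin_group)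
  then have "retraction T x = cls (word_restrict T w)" "word_restrict T w \<in> lists (T \<times> UNIV)"
    using word_restrict_in_words[of w T] by (simp_all add: retraction_artin_class del: in_lists_conv_set)
  then show "retraction T x \<in> parabolic V E m T"
    using assms by (simp add: parabolic_eq_classes del: in_lists_conv_set)
qed

lemma retraction_fixes_parabolic:
  assumes "T \<subseteq> V" "h \<in> parabolic V E m T"
  shows "retraction T h = h"
proof -
  obtain w where w: "w \<in> lists (T \<times> UNIV)" "h = cls w"
    using assms by (auto simp: parabolic_eq_classes)
  then have "w \<in> words" using lists_subset_words[OF assms(1)] by auto
  moreover have "word_restrict T w = w"
    unfolding word_restrict_def by (rule filter_True) (use w(1) in auto)
  ultimately show ?thesis using w(2) by (simp add: retraction_artin_class del: in_lists_conv_set)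
qed

lemma artin_gen_conj_eq_imp_eq:
  assumes "g \<in> carrier G" "s \<in> V" "t \<in> V" "g \<otimes>\<^bsub>G\<^esub> gen s = gen t \<otimes>\<^bsub>G\<^esub> g"
  shows "s = t"
proof -
  obtain w where w: "w \<in> words" "g = cls w" using assms(1) by (auto simp: carrier_artin_group)
  then have "cls (w @ [(s, True)]) = cls ((t, True) # w)"
    using assms(2-4) by (simp add: artin_gen_def mult_artin_class del: in_lists_conv_set)
  then have "eq (w @ [(s, True)]) ((t, True) # w)"
    using w assms(2) by (subst (asm) artin_class_eq_iff) auto
  then have "eq (word_restrict {s} (w @ [(s, True)])) (word_restrict {s} ((t, True) # w))"
    by (rule artin_eq_word_restrict)
  then have "word_degree (word_restrict {s} (w @ [(s, True)]))
      = word_degree (word_restrict {s} ((t, True) # w))"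
    by (rule artin_eq_word_degree)
  then show "s = t" by (auto simp: word_restrict_def split: if_splits)
qed

lemma quasi_centralizer_iff:
  assumes "S \<subseteq> V"
  shows "g \<in> quasi_centralizer V E m S \<longleftrightarrow>
    g \<in> carrier G \<and> (\<forall>s\<in>S. g \<otimes>\<^bsub>G\<^esub> gen s = gen s \<otimes>\<^bsub>G\<^esub> g)"
proof
  assume "g \<in> quasi_centralizer V E m S"
  then have g: "g \<in> carrier G" and q: "g <#\<^bsub>G\<^esub> (gen ` S) = (gen ` S) #>\<^bsub>G\<^esub> g"
    unfolding quasi_centralizer_def by auto
  have "g \<otimes>\<^bsub>G\<^esub> gen s = gen s \<otimes>\<^bsub>G\<^esub> g" if s: "s \<in> S" for s
  proof -
    have "g \<otimes>\<^bsub>G\<^esub> gen s \<in> (gen ` S) #>\<^bsub>G\<^esub> g"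
      using s unfolding q[symmetric] l_coset_def by auto
    then obtain t where t: "t \<in> S" "g \<otimes>\<^bsub>G\<^esub> gen s = gen t \<otimes>\<^bsub>G\<^esub> g"
      unfolding r_coset_def by auto
    then have "s = t" using artin_gen_conj_eq_imp_eq[OF g] s assms by blast
    then show ?thesis using t by simp
  qed
  then show "g \<in> carrier G \<and> (\<forall>s\<in>S. g \<otimes>\<^bsub>G\<^esub> gen s = gen s \<otimes>\<^bsub>G\<^esub> g)" using g by blast
next
  assume "g \<in> carrier G \<and> (\<forall>s\<in>S. g \<otimes>\<^bsub>G\<^esub> gen s = gen s \<otimes>\<^bsub>G\<^esub> g)"
  then show "g \<in> quasi_centralizer V E m S"
    unfolding quasi_centralizer_def l_coset_def r_coset_def by auto
qed

end

theorem lemma2p12: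
  fixes V :: "'v set" and E :: "'v set set" and m :: "'v set \<Rightarrow> nat" and S :: "'v set"
  defines "G \<equiv> artin_group V E m"
  assumes "EAFC V E m" and "finite V" and "S \<subseteq> V"
  shows "quasi_centralizer V E m S
           = carrier G \<inter> (\<Inter>s\<in>S. quasi_centralizer V E m {s})
         \<and> (\<forall>g\<in>normalizer G (parabolic V E m S) - parabolic V E m S.
           \<exists>g'\<in>normalizer G (parabolic V E m S).
             g' <#\<^bsub>G\<^esub> parabolic V E m S = g <#\<^bsub>G\<^esub> parabolic V E m S \<and>
             (\<forall>h\<in>parabolic V E m S. g' \<otimes>\<^bsub>G\<^esub> h = h \<otimes>\<^bsub>G\<^esub> g'))"
proof -
  interpret even_artin_presentation V E m
    using assms(2) unfolding EAFC_def by unfold_locales auto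
  have "g \<in> quasi_centralizer V E m {s} \<longleftrightarrow>
      g \<in> carrier G \<and> g \<otimes>\<^bsub>G\<^esub> artin_gen V E m s = artin_gen V E m s \<otimes>\<^bsub>G\<^esub> g"
    if "s \<in> S" for g s
    using quasi_centralizer_iff[of "{s}"] that assms(4) unfolding G_def by auto
  then have "quasi_centralizer V E m S = carrier G \<inter> (\<Inter>s\<in>S. quasi_centralizer V E m {s})"
    using quasi_centralizer_iff[OF assms(4)] unfolding G_def by auto
  moreover have "\<exists>g'\<in>normalizer G (parabolic V E m S).
      g' <#\<^bsub>G\<^esub> parabolic V E m S = g <#\<^bsub>G\<^esub> parabolic V E m S \<and>
      (\<forall>h\<in>parabolic V E m S. g' \<otimes>\<^bsub>G\<^esub> h = h \<otimes>\<^bsub>G\<^esub> g')"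
    if "g \<in> normalizer G (parabolic V E m S)" for g
    using retraction_normalizer_centralizing_representative[OF subgroup_parabolic[OF assms(4)]
        retraction_hom retraction_into_parabolic[OF assms(4)] retraction_fixes_parabolic[OF assms(4)]]
      that
    unfolding G_def by blast
  ultimately show ?thesis by blast
qed

end
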